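(* Let $L/K_P$ be a finite extension. There is a unique homomorphism $r:\mathbf{S}_L\to\mathbb{Q}$ such that for every $s\in\mathbf{S}_L$ and every $\alpha\in L^+$, $v_L(\alpha^s)=r(s)\cdot v_L(\alpha)$.
   Context: $P$ is a closed point of a smooth projective curve over a finite field of characteristic $p$, $K_P$ the completion of the function field at $P$, $\mathbb{C}_P$ the completion of an algebraic closure of $K_P$, $v_L=e_{L/K_P}v_P$ the normalized valuation of $L$ extended to $\mathbb{C}_P$. $L^+=L^\times/\mu_L$ ($\mu_L$ = roots of unity of $L$), and $U_L$ denotes the $1$-units of $L$, identified with a subgroup of $L^+$. The Goss plane $\mathbf{S}_L$ is the group of homomorphisms $s:L^+\to\mathbb{C}_P^\times$ for which there is $y(s)\in\mathbb{Z}_p$ with $s(u)=u^{y(s)}$ for all $u\in U_L$; one writes $\alpha^s=s(\alpha)$ and the group law on $\mathbf{S}_L$ additively. *)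

theory Defs
  imports "HOL-Computational_Algebra.Formal_Laurent_Series"
          "HOL-Computational_Algebra.Polynomial"
begin

(* K_P is modelled as F_q((t)) = 'k fls with 'k a finite field.
   The field C_P is a type 'c with a valuation v : 'c => rat (value at 0 irrelevant)
   and an embedding iota : 'k fls => 'c. *)

definition is_valuation :: "('c::field \<Rightarrow> rat) \<Rightarrow> bool" where
  "is_valuation v \<longleftrightarrow>
     (\<forall>x y. x \<noteq> 0 \<longrightarrow> y \<noteq> 0 \<longrightarrow> v (x * y) = v x + v y) \<and>
     (\<forall>x y. x \<noteq> 0 \<longrightarrow> y \<noteq> 0 \<longrightarrow> x + y \<noteq> 0 \<longrightarrow> v (x + y) \<ge> min (v x) (v y))"

definition vconv :: "('c::field \<Rightarrow> rat) \<Rightarrow> (nat \<Rightarrow> 'c) \<Rightarrow> 'c \<Rightarrow> bool" where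
  "vconv v X z \<longleftrightarrow> (\<forall>N::rat. \<exists>n0. \<forall>n\<ge>n0. X n = z \<or> v (X n - z) \<ge> N)"

definition vcauchy :: "('c::field \<Rightarrow> rat) \<Rightarrow> (nat \<Rightarrow> 'c) \<Rightarrow> bool" where
  "vcauchy v X \<longleftrightarrow> (\<forall>N::rat. \<exists>n0. \<forall>m\<ge>n0. \<forall>n\<ge>n0. X m = X n \<or> v (X m - X n) \<ge> N)"

definition vcomplete :: "('c::field \<Rightarrow> rat) \<Rightarrow> bool" where
  "vcomplete v \<longleftrightarrow> (\<forall>X. vcauchy v X \<longrightarrow> (\<exists>z. vconv v X z))"

definition alg_closed_field :: "'c::field itself \<Rightarrow> bool" where
  "alg_closed_field _ \<longleftrightarrow> (\<forall>p::'c poly. degree p > 0 \<longrightarrow> (\<exists>x. poly p x = 0))"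

definition algebraic_over :: "'c::field set \<Rightarrow> 'c \<Rightarrow> bool" where
  "algebraic_over S a \<longleftrightarrow> (\<exists>p::'c poly. p \<noteq> 0 \<and> (\<forall>i. coeff p i \<in> S) \<and> poly p a = 0)"

definition is_valued_embedding ::
    "('c::field \<Rightarrow> rat) \<Rightarrow> ('k::{field,finite} fls \<Rightarrow> 'c) \<Rightarrow> bool" where
  "is_valued_embedding v \<iota> \<longleftrightarrow>
     inj \<iota> \<and> \<iota> 1 = 1 \<and> (\<forall>a b. \<iota> (a + b) = \<iota> a + \<iota> b) \<and> (\<forall>a b. \<iota> (a * b) = \<iota> a * \<iota> b) \<and>
     (\<forall>f. f \<noteq> 0 \<longrightarrow> v (\<iota> f) = of_int (fls_subdegree f))"

definition is_C_P :: "('c::field \<Rightarrow> rat) \<Rightarrow> ('k::{field,finite} fls \<Rightarrow> 'c) \<Rightarrow> bool" where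
  "is_C_P v \<iota> \<longleftrightarrow>
     is_valuation v \<and> is_valued_embedding v \<iota> \<and> vcomplete v \<and> alg_closed_field TYPE('c) \<and>
     (\<forall>x (N::rat). \<exists>a. algebraic_over (range \<iota>) a \<and> (x = a \<or> v (x - a) \<ge> N))"

definition finite_ext :: "('k::{field,finite} fls \<Rightarrow> 'c::field) \<Rightarrow> 'c set \<Rightarrow> bool" where
  "finite_ext \<iota> L \<longleftrightarrow>
     range \<iota> \<subseteq> L \<and>
     (\<forall>x\<in>L. \<forall>y\<in>L. x + y \<in> L \<and> x * y \<in> L) \<and> (\<forall>x\<in>L. - x \<in> L \<and> inverse x \<in> L) \<and>
     (\<exists>B. finite B \<and> B \<subseteq> L \<and> (\<forall>x\<in>L. \<exists>c. x = (\<Sum>b\<in>B. \<iota> (c b) * b)))"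

definition ram_index :: "('c::field \<Rightarrow> rat) \<Rightarrow> 'c set \<Rightarrow> nat" where
  "ram_index v L = (THE e::nat. e > 0 \<and> v ` (L - {0}) = {of_int k / of_nat e | k. True})"

definition vL :: "('c::field \<Rightarrow> rat) \<Rightarrow> 'c set \<Rightarrow> 'c \<Rightarrow> rat" where
  "vL v L x = of_nat (ram_index v L) * v x"

definition roots_of_unity :: "'c::field set \<Rightarrow> 'c set" where
  "roots_of_unity L = {x\<in>L. \<exists>n>0. x ^ n = 1}"

definition one_units :: "('c::field \<Rightarrow> rat) \<Rightarrow> 'c set \<Rightarrow> 'c set" where
  "one_units v L = {x\<in>L. x = 1 \<or> v (x - 1) > 0}"

definition padic_int :: "nat \<Rightarrow> (nat \<Rightarrow> int) \<Rightarrow> bool" where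
  "padic_int p y \<longleftrightarrow> (\<forall>n. 0 \<le> y n \<and> y n < int p ^ n) \<and> (\<forall>n. y (Suc n) mod int p ^ n = y n)"

definition padic_pow :: "('c::field \<Rightarrow> rat) \<Rightarrow> 'c \<Rightarrow> (nat \<Rightarrow> int) \<Rightarrow> 'c \<Rightarrow> bool" where
  "padic_pow v u y z \<longleftrightarrow> vconv v (\<lambda>n. u ^ nat (y n)) z"

(* Homomorphisms L^+ = L^x/mu_L -> C_P^x are
   represented as functions 'c => 'c that are multiplicative on L^x, trivial on mu_L,
   and (for extensionality) equal to 1 off L^x. *)
definition goss_plane :: "nat \<Rightarrow> ('c::field \<Rightarrow> rat) \<Rightarrow> 'c set \<Rightarrow> ('c \<Rightarrow> 'c) set" where
  "goss_plane p v L = {s.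
     (\<forall>x. x \<notin> L - {0} \<longrightarrow> s x = 1) \<and>
     (\<forall>x\<in>L - {0}. s x \<noteq> 0) \<and>
     (\<forall>x\<in>L - {0}. \<forall>y\<in>L - {0}. s (x * y) = s x * s y) \<and>
     (\<forall>\<zeta>\<in>roots_of_unity L. s \<zeta> = 1) \<and>
     (\<exists>y. padic_int p y \<and> (\<forall>u\<in>one_units v L. padic_pow v u y (s u)))}"

definition goss_add :: "('c::field \<Rightarrow> 'c) \<Rightarrow> ('c \<Rightarrow> 'c) \<Rightarrow> 'c \<Rightarrow> 'c" where
  "goss_add s t = (\<lambda>x. s x * t x)"

end

theory Submission
  imports Defs
begin

text \<open>Let \<open>t = \<iota> X\<close>, so \<open>v t = 1\<close>, and put \<open>r s = v (s t)\<close>. A unit \<open>\<beta>\<close> of \<open>L\<close> has a power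
  that is a \<open>1\<close>-unit, because the residue field of \<open>L\<close> is finite (residually independent units
  are independent over \<open>K\<^sub>P\<close>); and on \<open>1\<close>-units \<open>s\<close> is a limit of integral powers, so
  \<open>v \<circ> s\<close> vanishes on all units. If \<open>v \<alpha> = a/b\<close>, then \<open>\<alpha>\<^sup>b t\<^sup>-\<^sup>a\<close> is a unit, whence
  \<open>b v (s \<alpha>) = a v (s t)\<close>, i.e. \<open>v (s \<alpha>) = r s \<cdot> v \<alpha>\<close>, and the same holds for \<open>v\<^sub>L = e v\<close>.
  Uniqueness needs \<open>v\<^sub>L t = e \<noteq> 0\<close>, i.e. that the value group of \<open>L\<close> is \<open>(1/e)\<int>\<close>: it is
  discrete since some \<open>j \<le> [L : K\<^sub>P]\<close> clears the denominator of every value.\<close>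

locale rat_valuation =
  fixes v :: "'c::field \<Rightarrow> rat"
  assumes valuation: "is_valuation v"
begin

lemma v_mult: "x \<noteq> 0 \<Longrightarrow> y \<noteq> 0 \<Longrightarrow> v (x * y) = v x + v y"
  using valuation by (simp add: is_valuation_def)

lemma v_add_ge_min: "x \<noteq> 0 \<Longrightarrow> y \<noteq> 0 \<Longrightarrow> x + y \<noteq> 0 \<Longrightarrow> min (v x) (v y) \<le> v (x + y)"
  using valuation by (simp add: is_valuation_def)

lemma v_one [simp]: "v 1 = 0"
  using v_mult[of 1 1] by simp

lemma v_uminus [simp]: "v (- x) = v x"
proof (cases "x = 0")
  case False
  have "v (- 1) = 0"
    using v_mult[of "- 1" "- 1"] by simp
  then show ?thesis
    using v_mult[of "- 1" x] False by simp
qed simp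

lemma v_inverse: "x \<noteq> 0 \<Longrightarrow> v (inverse x) = - v x"
  using v_mult[of x "inverse x"] by simp

lemma v_power: "x \<noteq> 0 \<Longrightarrow> v (x ^ n) = of_nat n * v x"
  by (induction n) (simp_all add: v_mult algebra_simps)

lemma v_power_int: "x \<noteq> 0 \<Longrightarrow> v (x powi n) = of_int n * v x"
  by (cases "0 \<le> n") (simp_all add: power_int_def v_power v_inverse)

lemma v_add_eq_min:
  assumes "a \<noteq> 0" "b \<noteq> 0" "v a \<noteq> v b"
  shows "a + b \<noteq> 0 \<and> v (a + b) = min (v a) (v b)"
proof -
  have sum_nz: "a + b \<noteq> 0"
  proof
    assume "a + b = 0"
    then have "b = - a"
      by (simp add: add_eq_0_iff)
    with assms(3) show False
      by simp
  qed
  have "v a \<ge> min (v (a + b)) (v b)" "v b \<ge> min (v (a + b)) (v a)"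
    using v_add_ge_min[of "a + b" "- b"] v_add_ge_min[of "a + b" "- a"] assms sum_nz by simp_all
  then show ?thesis
    using v_add_ge_min[of a b] assms sum_nz by linarith
qed

lemma v_eq_if_close:
  assumes "a \<noteq> 0" "b = a \<or> v a < v (b - a)"
  shows "b \<noteq> 0 \<and> v b = v a"
proof (cases "b = a")
  case False
  then have "a + (b - a) \<noteq> 0 \<and> v (a + (b - a)) = min (v a) (v (b - a))"
    using v_add_eq_min[of a "b - a"] assms by auto
  then show ?thesis
    using assms False by simp
qed (use assms in simp)

lemma sum_neq_0_if_values_distinct:
  assumes "finite S" "S \<noteq> {}" "\<And>x. x \<in> S \<Longrightarrow> f x \<noteq> 0" "inj_on (\<lambda>x. v (f x)) S"
  shows "sum f S \<noteq> 0"
proof -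
  have "sum f S \<noteq> 0 \<and> (\<exists>x\<in>S. v (sum f S) = v (f x))"
    using assms
  proof (induction S rule: finite_ne_induct)
    case (insert y F)
    then obtain x where x: "x \<in> F" "v (sum f F) = v (f x)" and "sum f F \<noteq> 0"
      by auto
    moreover have "v (f y) \<noteq> v (f x)"
      using insert.prems(2) insert.hyps(3) x(1) by (auto simp: inj_on_def)
    ultimately show ?case
      using v_add_eq_min[of "f y" "sum f F"] insert by (auto simp: min_def)
  qed simp
  then show ?thesis
    by simp
qed

lemma vconv_unit:
  assumes "vconv v X z" "\<And>n. X n \<noteq> 0 \<and> v (X n) = 0"
  shows "z \<noteq> 0 \<and> v z = 0"
proof -
  obtain n where n: "X n = z \<or> 1 \<le> v (X n - z)"
    using assms(1) unfolding vconv_def by blast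
  have "v (z - X n) = v (X n - z)"
    using v_uminus[of "X n - z"] by simp
  then have "z = X n \<or> v (X n) < v (z - X n)"
    using n assms(2)[of n] by auto
  then show ?thesis
    using v_eq_if_close[of "X n" z] assms(2) by simp
qed

definition max_ideal :: "'c set" where
  "max_ideal = {z. z = 0 \<or> 0 < v z}"

lemma zero_in_max_ideal [simp]: "0 \<in> max_ideal"
  by (simp add: max_ideal_def)

lemma uminus_in_max_ideal: "a \<in> max_ideal \<Longrightarrow> - a \<in> max_ideal"
  by (simp add: max_ideal_def)

lemma add_in_max_ideal:
  assumes "a \<in> max_ideal" "b \<in> max_ideal"
  shows "a + b \<in> max_ideal"
  using assms v_add_ge_min[of a b] by (cases "a = 0 \<or> b = 0 \<or> a + b = 0") (auto simp: max_ideal_def)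

lemma diff_in_max_ideal: "a \<in> max_ideal \<Longrightarrow> b \<in> max_ideal \<Longrightarrow> a - b \<in> max_ideal"
  using add_in_max_ideal[of a "- b"] uminus_in_max_ideal by simp

lemma sum_in_max_ideal: "(\<And>x. x \<in> S \<Longrightarrow> f x \<in> max_ideal) \<Longrightarrow> sum f S \<in> max_ideal"
  by (induction S rule: infinite_finite_induct) (simp_all add: add_in_max_ideal)

lemma mult_in_max_ideal:
  assumes "a \<in> max_ideal" "b \<noteq> 0" "0 \<le> v b"
  shows "b * a \<in> max_ideal"
  using assms v_mult[of b a] by (cases "a = 0") (auto simp: max_ideal_def)

end

lemma rat_multiples_eq_imp_eq:
  fixes a b :: nat
  assumes "0 < a" "0 < b" "{of_int k / of_nat a | k. True} = {of_int k / (of_nat b :: rat) | k. True}"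
  shows "a = b"
proof -
  have "x dvd y"
    if xy: "0 < x" "0 < y" "{of_int k / of_nat x | k. True} = {of_int k / (of_nat y :: rat) | k. True}"
    for x y :: nat
  proof -
    have "1 / of_nat x \<in> {of_int k / (of_nat x :: rat) | k. True}"
      by (intro CollectI exI[of _ 1]) simp
    then have "1 / of_nat x \<in> {of_int k / (of_nat y :: rat) | k. True}"
      by (simp only: xy(3))
    then obtain k where "1 / of_nat x = of_int k / (of_nat y :: rat)"
      by auto
    then have "of_int (int y) = (of_int (k * int x) :: rat)"
      using xy(1,2) by (simp add: field_simps)
    then have "int y = int x * k"
      by (simp only: of_int_eq_iff mult.commute)
    then have "int x dvd int y"
      by (rule dvdI)
    then show ?thesis
      by simp
  qed
  then show ?thesis
    using assms by (simp add: dvd_antisym)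
qed

text \<open>The generator is the least positive element \<open>k\<^sub>0/N\<close>; by division with remainder, every
  element is an integral multiple of it.\<close>

lemma rat_subgroup_cyclic:
  fixes G :: "rat set" and N :: nat
  assumes add: "\<And>g h. g \<in> G \<Longrightarrow> h \<in> G \<Longrightarrow> g + h \<in> G"
    and int_mult: "\<And>g m. g \<in> G \<Longrightarrow> of_int m * g \<in> G"
    and N: "0 < N" "\<And>g. g \<in> G \<Longrightarrow> of_nat N * g \<in> \<int>"
    and "1 \<in> G"
  obtains d where "0 < d" "d \<in> G" "\<And>g. g \<in> G \<Longrightarrow> \<exists>q::int. g = of_int q * d"
proof -
  define M where "M = {k::nat. 0 < k \<and> of_nat k / of_nat N \<in> G}"
  have "N \<in> M"
    using N \<open>1 \<in> G\<close> by (simp add: M_def)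
  define k0 where "k0 = (LEAST k. k \<in> M)"
  have "k0 \<in> M"
    unfolding k0_def using \<open>N \<in> M\<close> by (rule LeastI)
  then have k0: "0 < k0" "of_nat k0 / of_nat N \<in> G"
    by (auto simp: M_def)
  have "\<exists>q::int. g = of_int q * (of_nat k0 / of_nat N)" if g: "g \<in> G" for g
  proof -
    obtain a where a: "of_nat N * g = of_int a"
      using N(2)[OF g] by (elim Ints_cases)
    define r where "r = a mod int k0"
    have r: "0 \<le> r" "r < int k0"
      using k0 by (simp_all add: r_def)
    have a_split: "a = a div int k0 * int k0 + r"
      by (simp add: r_def)
    have "g + of_int (- (a div int k0)) * (of_nat k0 / of_nat N) \<in> G"
      using add[OF g int_mult[OF k0(2)]] .
    moreover have "g + of_int (- (a div int k0)) * (of_nat k0 / of_nat N) = of_int r / of_nat N"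
      using a N(1) by (subst (asm) a_split) (simp add: field_simps)
    ultimately have "of_int r / of_nat N \<in> G"
      by simp
    have "r = 0"
    proof (rule ccontr)
      assume "r \<noteq> 0"
      then have "nat r \<in> M"
        using \<open>of_int r / of_nat N \<in> G\<close> r by (simp add: M_def)
      then have "k0 \<le> nat r"
        unfolding k0_def by (rule Least_le)
      with r show False
        by simp
    qed
    then have "g = of_int (a div int k0) * (of_nat k0 / of_nat N)"
      using a N(1) by (subst (asm) a_split) (simp add: field_simps)
    then show ?thesis
      by blast
  qed
  with k0 N(1) show thesis
    by (intro that[of "of_nat k0 / of_nat N"]) simp_all
qed

lemma rat_subgroup_eq_multiples:
  fixes G :: "rat set" and N :: nat
  assumes "\<And>g h. g \<in> G \<Longrightarrow> h \<in> G \<Longrightarrow> g + h \<in> G" "\<And>g m. g \<in> G \<Longrightarrow> of_int m * g \<in> G"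
    and "0 < N" "\<And>g. g \<in> G \<Longrightarrow> of_nat N * g \<in> \<int>"
    and "1 \<in> G"
  shows "\<exists>e>0. G = {of_int k / of_nat e | k. True}"
proof -
  obtain d where d: "0 < d" "d \<in> G" "\<And>g. g \<in> G \<Longrightarrow> \<exists>q::int. g = of_int q * d"
    using rat_subgroup_cyclic[OF assms] by blast
  obtain q where q: "1 = of_int q * d"
    using d(3)[OF \<open>1 \<in> G\<close>] by blast
  then have "0 < of_int q * d"
    by simp
  with \<open>0 < d\<close> have "0 < q"
    by (simp add: zero_less_mult_iff)
  with q have "d = 1 / of_nat (nat q)"
    by (simp add: field_simps)
  moreover have "G = {of_int k * d | k. True}"
    using d(3) assms(2)[OF d(2)] by blast
  ultimately show ?thesis
    using \<open>0 < q\<close> by (intro exI[of _ "nat q"]) auto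
qed

lemma fls_normalize_family:
  fixes u :: "'a \<Rightarrow> 'b::field fls"
  assumes "finite S" "x0 \<in> S" "u x0 \<noteq> 0"
  obtains p where "p \<noteq> 0" "\<And>x. x \<in> S \<Longrightarrow> 0 \<le> fls_subdegree (u x * p)"
    "\<exists>x\<in>S. fls_nth (u x * p) 0 \<noteq> 0"
proof -
  define m where "m = Min ((\<lambda>x. fls_subdegree (u x)) ` {x\<in>S. u x \<noteq> 0})"
  have "m \<in> (\<lambda>x. fls_subdegree (u x)) ` {x\<in>S. u x \<noteq> 0}"
    unfolding m_def using assms by (intro Min_in) auto
  then obtain x1 where x1: "x1 \<in> S" "u x1 \<noteq> 0" "fls_subdegree (u x1) = m"
    by auto
  have m_le: "m \<le> fls_subdegree (u x)" if "x \<in> S" "u x \<noteq> 0" for x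
    unfolding m_def using assms(1) that by (intro Min_le) auto
  define p :: "'b fls" where "p = fls_X_intpow (- m)"
  have p: "p \<noteq> 0" "fls_subdegree p = - m"
    unfolding p_def by (rule fls_X_intpow_nonzero, rule fls_subdegree_fls_X_intpow)
  have "0 \<le> fls_subdegree (u x * p)" if "x \<in> S" for x
    using that m_le p by (cases "u x = 0") auto
  moreover have "fls_nth (u x1 * p) 0 \<noteq> 0"
    using nth_fls_subdegree_nonzero[of "u x1 * p"] x1 p by simp
  ultimately show thesis
    using that[of p] p(1) x1(1) by blast
qed

locale K_P_extension = rat_valuation v
  for v :: "'c::field \<Rightarrow> rat" +
  fixes \<iota> :: "'k::{field,finite} fls \<Rightarrow> 'c" and L :: "'c set"
  assumes valued_embedding: "is_valued_embedding v \<iota>"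
    and finite_extension: "finite_ext \<iota> L"
begin

lemma iota_add: "\<iota> (a + b) = \<iota> a + \<iota> b"
  and iota_mult: "\<iota> (a * b) = \<iota> a * \<iota> b"
  and iota_one [simp]: "\<iota> 1 = 1"
  and v_iota: "f \<noteq> 0 \<Longrightarrow> v (\<iota> f) = of_int (fls_subdegree f)"
  using valued_embedding by (simp_all add: is_valued_embedding_def)

lemma iota_zero [simp]: "\<iota> 0 = 0"
  using iota_add[of 0 0] by (metis add_cancel_right_right)

lemma iota_uminus: "\<iota> (- a) = - \<iota> a"
  using iota_add[of a "- a"] by (simp add: add_eq_0_iff)

lemma iota_diff: "\<iota> (a - b) = \<iota> a - \<iota> b"
  using iota_add[of a "- b"] by (simp add: iota_uminus)

lemma iota_eq_0_iff [simp]: "\<iota> a = 0 \<longleftrightarrow> a = 0"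
  using valued_embedding iota_zero unfolding is_valued_embedding_def by (metis injD)

lemma L_iota: "\<iota> a \<in> L"
  and L_mult: "x \<in> L \<Longrightarrow> y \<in> L \<Longrightarrow> x * y \<in> L"
  and L_inverse: "x \<in> L \<Longrightarrow> inverse x \<in> L"
  using finite_extension by (auto simp: finite_ext_def)

lemma L_one: "1 \<in> L"
  using L_iota[of 1] by simp

lemma L_power: "x \<in> L \<Longrightarrow> x ^ n \<in> L"
  by (induction n) (simp_all add: L_one L_mult)

lemma L_power_int: "x \<in> L \<Longrightarrow> x powi n \<in> L"
  by (simp add: power_int_def L_power L_inverse)

lemma iota_X: "\<iota> fls_X \<in> L" "\<iota> fls_X \<noteq> 0" "v (\<iota> fls_X) = 1"
  using L_iota v_iota[of fls_X] by simp_all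

text \<open>The residue field \<open>'k\<close> of \<open>K\<^sub>P\<close>, embedded as the constant Laurent series.\<close>

definition \<kappa> :: "'k \<Rightarrow> 'c" where
  "\<kappa> c = \<iota> (fls_const c)"

lemma kappa_mult: "\<kappa> (a * b) = \<kappa> a * \<kappa> b"
  and kappa_uminus: "\<kappa> (- a) = - \<kappa> a"
  and kappa_zero [simp]: "\<kappa> 0 = 0"
  and kappa_one [simp]: "\<kappa> 1 = 1"
  and kappa_eq_0_iff [simp]: "\<kappa> a = 0 \<longleftrightarrow> a = 0"
  by (simp_all add: \<kappa>_def iota_mult[symmetric] iota_uminus[symmetric] fls_const_nonzero)

lemma v_kappa: "c \<noteq> 0 \<Longrightarrow> v (\<kappa> c) = 0"
  by (simp add: \<kappa>_def v_iota fls_const_nonzero)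

sublocale K: vector_space "\<lambda>c x. \<iota> c * x"
  by unfold_locales (simp_all add: iota_add iota_mult distrib_left distrib_right mult.assoc)

lemma independent_card_bound:
  obtains n where "\<And>X. X \<subseteq> L \<Longrightarrow> K.independent X \<Longrightarrow> finite X \<and> card X \<le> n"
proof -
  obtain B where B: "finite B" "\<forall>x\<in>L. \<exists>c. x = (\<Sum>b\<in>B. \<iota> (c b) * b)"
    using finite_extension unfolding finite_ext_def by blast
  have "L \<subseteq> K.span B"
    using B by (auto simp: K.span_finite)
  then show thesis
    using K.independent_span_bound[OF B(1)] that by (meson order_trans)
qed

lemma independent_if_values_incongruent:
  assumes "X \<subseteq> L - {0}" "\<And>x y. x \<in> X \<Longrightarrow> y \<in> X \<Longrightarrow> x \<noteq> y \<Longrightarrow> v x - v y \<notin> \<int>"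
  shows "K.independent X"
  unfolding K.independent_explicit_finite_subsets
proof (intro allI impI ballI; rule ccontr)
  fix S u x0
  assume S: "S \<subseteq> X" "finite S" and rel: "(\<Sum>x\<in>S. \<iota> (u x) * x) = 0"
    and x0: "x0 \<in> S" "u x0 \<noteq> 0"
  define S' where "S' = {x\<in>S. u x \<noteq> 0}"
  have val: "v (\<iota> (u x) * x) = of_int (fls_subdegree (u x)) + v x" if "x \<in> S'" for x
  proof -
    have "x \<noteq> 0" "u x \<noteq> 0"
      using that S(1) assms(1) by (auto simp: S'_def)
    then show ?thesis
      by (simp add: v_mult v_iota)
  qed
  have "inj_on (\<lambda>x. v (\<iota> (u x) * x)) S'"
  proof (rule inj_onI, rule ccontr)
    fix x y assume xy: "x \<in> S'" "y \<in> S'" "v (\<iota> (u x) * x) = v (\<iota> (u y) * y)" "x \<noteq> y"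
    then have "v x - v y = of_int (fls_subdegree (u y) - fls_subdegree (u x))"
      using val by simp
    moreover have "v x - v y \<notin> \<int>"
      using assms(2) S(1) xy by (auto simp: S'_def)
    ultimately show False
      by simp
  qed
  then have "(\<Sum>x\<in>S'. \<iota> (u x) * x) \<noteq> 0"
    using S x0 assms(1) by (intro sum_neq_0_if_values_distinct) (auto simp: S'_def)
  moreover have "(\<Sum>x\<in>S'. \<iota> (u x) * x) = (\<Sum>x\<in>S. \<iota> (u x) * x)"
    unfolding S'_def using S(2) by (intro sum.mono_neutral_left) auto
  ultimately show False
    using rel by simp
qed

text \<open>Otherwise the values of \<open>\<alpha>\<^sup>0, \<dots>, \<alpha>\<^sup>n\<close> are pairwise incongruent modulo \<open>\<int>\<close>, and these
  would be \<open>n + 1\<close> independent elements.\<close>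

lemma value_denominator_le:
  assumes n: "\<And>X. X \<subseteq> L \<Longrightarrow> K.independent X \<Longrightarrow> finite X \<and> card X \<le> n"
    and \<alpha>: "\<alpha> \<in> L" "\<alpha> \<noteq> 0"
  shows "\<exists>j. 0 < j \<and> j \<le> n \<and> of_nat j * v \<alpha> \<in> \<int>"
proof (rule ccontr)
  assume none: "\<not> ?thesis"
  have incongruent: "v (\<alpha> ^ i) - v (\<alpha> ^ k) \<notin> \<int>" if ik: "i \<le> n" "k \<le> n" "i \<noteq> k" for i k
  proof
    assume "v (\<alpha> ^ i) - v (\<alpha> ^ k) \<in> \<int>"
    define m where "m = int i - int k"
    have "v (\<alpha> ^ i) - v (\<alpha> ^ k) = of_int m * v \<alpha>"
      using \<alpha> by (simp add: m_def v_power algebra_simps)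
    with \<open>v (\<alpha> ^ i) - v (\<alpha> ^ k) \<in> \<int>\<close> have "of_int m * v \<alpha> \<in> \<int>"
      by simp
    then have "of_nat (nat \<bar>m\<bar>) * v \<alpha> \<in> \<int>"
      by (cases "m < 0") (simp_all add: abs_if minus_in_Ints_iff)
    moreover have "0 < nat \<bar>m\<bar>" "nat \<bar>m\<bar> \<le> n"
      using ik by (auto simp: m_def)
    ultimately show False
      using none by blast
  qed
  define X where "X = (\<lambda>i. \<alpha> ^ i) ` {0..n}"
  have "inj_on (\<lambda>i. \<alpha> ^ i) {0..n}"
    using incongruent by (intro inj_onI) fastforce
  then have "card X = n + 1"
    by (simp add: X_def card_image)
  moreover have "X \<subseteq> L - {0}"
    using \<alpha> by (auto simp: X_def L_power)
  moreover have "K.independent X"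
  proof (rule independent_if_values_incongruent[OF \<open>X \<subseteq> L - {0}\<close>])
    fix x y assume "x \<in> X" "y \<in> X" "x \<noteq> y"
    moreover obtain i k where "i \<le> n" "k \<le> n" "x = \<alpha> ^ i" "y = \<alpha> ^ k"
      using \<open>x \<in> X\<close> \<open>y \<in> X\<close> by (auto simp: X_def)
    ultimately show "v x - v y \<notin> \<int>"
      using incongruent by blast
  qed
  ultimately show False
    using n[of X] by auto
qed

lemma value_denominator_bound:
  obtains N :: nat where "0 < N" "\<And>\<alpha>. \<alpha> \<in> L \<Longrightarrow> \<alpha> \<noteq> 0 \<Longrightarrow> of_nat N * v \<alpha> \<in> \<int>"
proof -
  obtain n where n: "\<And>X. X \<subseteq> L \<Longrightarrow> K.independent X \<Longrightarrow> finite X \<and> card X \<le> n"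
    using independent_card_bound by blast
  have "of_nat (fact n) * v \<alpha> \<in> \<int>" if \<alpha>: "\<alpha> \<in> L" "\<alpha> \<noteq> 0" for \<alpha>
  proof -
    obtain j where j: "0 < j" "j \<le> n" "of_nat j * v \<alpha> \<in> \<int>"
      using value_denominator_le[OF n \<alpha>] by blast
    have "j dvd fact n"
      using j by (simp add: dvd_fact)
    then obtain m where "fact n = j * m"
      by (elim dvdE)
    then have "of_nat (fact n) * v \<alpha> = of_nat m * (of_nat j * v \<alpha>)"
      by (simp only: of_nat_mult ac_simps)
    then show ?thesis
      using Ints_mult[OF Ints_of_nat j(3)] by (simp only:)
  qed
  then show thesis
    using that[of "fact n"] by simp
qed

lemma value_group_eq_multiples: "\<exists>e>0. v ` (L - {0}) = {of_int k / of_nat e | k. True}"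
proof -
  obtain N where "0 < N" "\<And>\<alpha>. \<alpha> \<in> L \<Longrightarrow> \<alpha> \<noteq> 0 \<Longrightarrow> of_nat N * v \<alpha> \<in> \<int>"
    using value_denominator_bound by blast
  moreover have "1 \<in> v ` (L - {0})"
    using iota_X by force
  moreover have "g + h \<in> v ` (L - {0})" if "g \<in> v ` (L - {0})" "h \<in> v ` (L - {0})" for g h
    using that by (auto simp: image_iff v_mult[symmetric] intro!: bexI[of _ "_ * _"] L_mult)
  moreover have "of_int m * g \<in> v ` (L - {0})" if "g \<in> v ` (L - {0})" for g m
    using that by (auto simp: image_iff v_power_int[symmetric] intro!: bexI[of _ "_ powi m"] L_power_int)
  ultimately show ?thesis
    by (intro rat_subgroup_eq_multiples[of _ N]) auto
qed

lemma ram_index_pos: "0 < ram_index v L"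
proof -
  obtain e where e: "0 < e" "v ` (L - {0}) = {of_int k / of_nat e | k. True}"
    using value_group_eq_multiples by blast
  then have "\<exists>!e. 0 < e \<and> v ` (L - {0}) = {of_int k / of_nat e | k. True}"
    using rat_multiples_eq_imp_eq by (intro ex1I[of _ e]) auto
  from theI'[OF this] show ?thesis
    unfolding ram_index_def by (elim conjE)
qed

lemma iota_minus_constant_term_in_max_ideal:
  assumes "0 \<le> fls_subdegree f"
  shows "\<iota> (f - fls_const (fls_nth f 0)) \<in> max_ideal"
proof (cases "f - fls_const (fls_nth f 0) = 0")
  case False
  have "1 \<le> fls_subdegree (f - fls_const (fls_nth f 0))"
    using False assms by (intro fls_subdegree_geI) (auto simp: not_less_iff_gr_or_eq)
  then show ?thesis
    using False by (simp add: max_ideal_def v_iota)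
qed (simp add: max_ideal_def)

definition residually_independent :: "'c set \<Rightarrow> bool" where
  "residually_independent E \<longleftrightarrow> finite E \<and> E \<subseteq> L \<and> (\<forall>x\<in>E. x \<noteq> 0 \<and> v x = 0) \<and>
     (\<forall>d. (\<Sum>x\<in>E. \<kappa> (d x) * x) \<in> max_ideal \<longrightarrow> (\<forall>x\<in>E. d x = 0))"

text \<open>A nontrivial relation over \<open>K\<^sub>P\<close>, rescaled so that all coefficients are integral and
  some is a unit, reduces to a nontrivial relation between the residues.\<close>

lemma residually_independent_imp_independent:
  assumes E: "residually_independent E"
  shows "K.independent E"
proof -
  have fin: "finite E" and units: "\<And>x. x \<in> E \<Longrightarrow> x \<noteq> 0 \<and> v x = 0"
    using E by (auto simp: residually_independent_def)
  have zero_coefficient: "u x0 = 0" if rel: "(\<Sum>x\<in>E. \<iota> (u x) * x) = 0" and "x0 \<in> E" for u x0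
  proof (rule ccontr)
    assume "u x0 \<noteq> 0"
    then obtain p where p: "\<And>x. x \<in> E \<Longrightarrow> 0 \<le> fls_subdegree (u x * p)"
      "\<exists>x\<in>E. fls_nth (u x * p) 0 \<noteq> 0"
      using fls_normalize_family[of E x0 u] fin \<open>x0 \<in> E\<close> by blast
    define c where "c x = u x * p" for x
    define d where "d x = fls_nth (c x) 0" for x
    have "\<kappa> (d x) * x = \<iota> (c x) * x - x * \<iota> (c x - fls_const (d x))" for x
      by (simp add: \<kappa>_def iota_diff algebra_simps)
    then have "(\<Sum>x\<in>E. \<kappa> (d x) * x)
        = \<iota> p * (\<Sum>x\<in>E. \<iota> (u x) * x) - (\<Sum>x\<in>E. x * \<iota> (c x - fls_const (d x)))"
      by (simp add: sum_subtractf sum_distrib_left c_def iota_mult mult_ac)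
    then have "(\<Sum>x\<in>E. \<kappa> (d x) * x) = - (\<Sum>x\<in>E. x * \<iota> (c x - fls_const (d x)))"
      using rel by simp
    moreover have "x * \<iota> (c x - fls_const (d x)) \<in> max_ideal" if "x \<in> E" for x
      using iota_minus_constant_term_in_max_ideal[OF p(1)[OF that]] units[OF that]
      by (intro mult_in_max_ideal) (simp_all add: c_def d_def)
    ultimately have "(\<Sum>x\<in>E. \<kappa> (d x) * x) \<in> max_ideal"
      by (simp only:) (intro uminus_in_max_ideal sum_in_max_ideal)
    then have "\<forall>x\<in>E. d x = 0"
      using E unfolding residually_independent_def by blast
    then show False
      using p(2) by (simp add: d_def c_def)
  qed
  show ?thesis
    unfolding K.independent_explicit_finite_subsets
  proof (intro allI impI ballI)
    fix t u x0
    assume "t \<subseteq> E" "finite t" "(\<Sum>x\<in>t. \<iota> (u x) * x) = 0" "x0 \<in> t"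
    moreover have "(\<Sum>x\<in>E. \<iota> (if x \<in> t then u x else 0) * x) = (\<Sum>x\<in>t. \<iota> (u x) * x)"
      using fin \<open>t \<subseteq> E\<close> by (intro sum.mono_neutral_cong_right) auto
    ultimately show "u x0 = 0"
      using zero_coefficient[of "\<lambda>x. if x \<in> t then u x else 0" x0] by auto
  qed
qed

lemma maximal_residually_independent_exists:
  obtains E where "residually_independent E"
    "\<And>E'. residually_independent E' \<Longrightarrow> card E' \<le> card E"
proof -
  obtain n where n: "\<And>X. X \<subseteq> L \<Longrightarrow> K.independent X \<Longrightarrow> finite X \<and> card X \<le> n"
    using independent_card_bound by blast
  have "card E < Suc n" if "residually_independent E" for E
    using n[of E] that residually_independent_imp_independent
    by (auto simp: residually_independent_def)
  moreover have "residually_independent {}"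
    by (simp add: residually_independent_def)
  ultimately show thesis
    using Lattices_Big.ex_has_greatest_nat[of residually_independent "{}" card "Suc n"] that
    by blast
qed

lemma unit_congruent_to_combination:
  assumes E: "residually_independent E" "\<And>E'. residually_independent E' \<Longrightarrow> card E' \<le> card E"
    and x: "x \<in> L" "x \<noteq> 0" "v x = 0"
  shows "\<exists>d. x - (\<Sum>e\<in>E. \<kappa> (d e) * e) \<in> max_ideal"
proof (cases "x \<in> E")
  case True
  have "(\<Sum>e\<in>E. \<kappa> (if e = x then 1 else 0) * e) = (\<Sum>e\<in>E. if e = x then e else 0)"
    by (intro sum.cong) simp_all
  then have "x - (\<Sum>e\<in>E. \<kappa> (if e = x then 1 else 0) * e) = 0"
    using True E(1) by (simp add: residually_independent_def)
  then show ?thesis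
    by (intro exI[of _ "\<lambda>e. if e = x then 1 else 0"]) simp
next
  case False
  have fin: "finite E"
    using E(1) by (simp add: residually_independent_def)
  then have "card (insert x E) > card E"
    using False by simp
  then have "\<not> residually_independent (insert x E)"
    using E(2) leD by blast
  then obtain d where d: "\<kappa> (d x) * x + (\<Sum>e\<in>E. \<kappa> (d e) * e) \<in> max_ideal"
    and nontrivial: "\<exists>e\<in>insert x E. d e \<noteq> 0"
    using E(1) x fin False by (auto simp: residually_independent_def)
  have "d x \<noteq> 0"
  proof
    assume "d x = 0"
    then have "(\<Sum>e\<in>E. \<kappa> (d e) * e) \<in> max_ideal"
      using d by simp
    with E(1) nontrivial \<open>d x = 0\<close> show False
      by (auto simp: residually_independent_def)
  qed
  define d' where "d' e = - (inverse (d x) * d e)" for e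
  have "\<kappa> (inverse (d x)) * (\<kappa> (d x) * x + (\<Sum>e\<in>E. \<kappa> (d e) * e)) \<in> max_ideal"
    using d \<open>d x \<noteq> 0\<close> by (intro mult_in_max_ideal) (simp_all add: v_kappa)
  moreover have "\<kappa> (inverse (d x)) * (\<kappa> (d x) * x) = x"
    using \<open>d x \<noteq> 0\<close> by (simp add: mult.assoc[symmetric] kappa_mult[symmetric])
  moreover have "\<kappa> (inverse (d x)) * (\<Sum>e\<in>E. \<kappa> (d e) * e) = - (\<Sum>e\<in>E. \<kappa> (d' e) * e)"
    by (simp add: d'_def sum_distrib_left kappa_uminus sum_negf mult.assoc[symmetric]
        kappa_mult[symmetric])
  ultimately show ?thesis
    by (auto simp: distrib_left)
qed

lemma finite_residue_representatives:
  obtains R where "finite R" "\<And>x. x \<in> L \<Longrightarrow> x \<noteq> 0 \<Longrightarrow> v x = 0 \<Longrightarrow> \<exists>\<rho>\<in>R. x - \<rho> \<in> max_ideal"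
proof -
  obtain E where E: "residually_independent E"
    "\<And>E'. residually_independent E' \<Longrightarrow> card E' \<le> card E"
    using maximal_residually_independent_exists by blast
  define R where "R = (\<lambda>d. \<Sum>e\<in>E. \<kappa> (d e) * e) ` (E \<rightarrow>\<^sub>E UNIV)"
  have "finite E"
    using E(1) by (simp add: residually_independent_def)
  then have "finite R"
    unfolding R_def by (intro finite_imageI finite_PiE) simp_all
  moreover have "\<exists>\<rho>\<in>R. x - \<rho> \<in> max_ideal" if x: "x \<in> L" "x \<noteq> 0" "v x = 0" for x
  proof -
    obtain d where d: "x - (\<Sum>e\<in>E. \<kappa> (d e) * e) \<in> max_ideal"
      using unit_congruent_to_combination[OF E x] by blast
    have "(\<Sum>e\<in>E. \<kappa> (restrict d E e) * e) \<in> R"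
      unfolding R_def by (rule imageI) (auto simp: PiE_iff extensional_def)
    moreover have "(\<Sum>e\<in>E. \<kappa> (restrict d E e) * e) = (\<Sum>e\<in>E. \<kappa> (d e) * e)"
      by (intro sum.cong) simp_all
    ultimately show ?thesis
      using d by (intro bexI[of _ "\<Sum>e\<in>E. \<kappa> (restrict d E e) * e"]) simp_all
  qed
  ultimately show thesis
    using that by blast
qed

lemma unit_power_in_one_units:
  assumes \<beta>: "\<beta> \<in> L" "\<beta> \<noteq> 0" "v \<beta> = 0"
  shows "\<exists>N>0. \<beta> ^ N \<in> one_units v L"
proof -
  obtain R where R: "finite R" "\<And>x. x \<in> L \<Longrightarrow> x \<noteq> 0 \<Longrightarrow> v x = 0 \<Longrightarrow> \<exists>\<rho>\<in>R. x - \<rho> \<in> max_ideal"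
    using finite_residue_representatives by blast
  have powers: "\<beta> ^ i \<in> L" "\<beta> ^ i \<noteq> 0" "v (\<beta> ^ i) = 0" for i
    using \<beta> by (simp_all add: L_power v_power)
  define f where "f i = (SOME \<rho>. \<rho> \<in> R \<and> \<beta> ^ i - \<rho> \<in> max_ideal)" for i
  have f: "f i \<in> R" "\<beta> ^ i - f i \<in> max_ideal" for i
    using someI_ex[OF R(2)[OF powers, of i, unfolded Bex_def]] by (simp_all add: f_def)
  have "card (f ` {0..card R}) \<le> card R"
    using f(1) R(1) by (intro card_mono) auto
  then have "\<not> inj_on f {0..card R}"
    by (intro pigeonhole) simp
  then obtain i k where "i < k" "f i = f k"
    using linorder_inj_onI'[of "{0..card R}" f] by blast
  then have "\<beta> ^ i * (\<beta> ^ (k - i) - 1) \<in> max_ideal"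
    using diff_in_max_ideal[OF f(2)[of k] f(2)[of i]]
    by (simp add: algebra_simps power_add[symmetric])
  then have "\<beta> ^ (k - i) - 1 \<in> max_ideal"
    using powers[of i] v_mult[of "\<beta> ^ i"] by (cases "\<beta> ^ (k - i) - 1 = 0") (auto simp: max_ideal_def)
  then show ?thesis
    using \<open>i < k\<close> \<beta>(1) by (intro exI[of _ "k - i"]) (auto simp: one_units_def max_ideal_def L_power)
qed

context
  fixes p :: nat and s :: "'c \<Rightarrow> 'c"
  assumes s: "s \<in> goss_plane p v L"
begin

lemma goss_nonzero: "x \<in> L \<Longrightarrow> x \<noteq> 0 \<Longrightarrow> s x \<noteq> 0"
  and goss_mult: "x \<in> L \<Longrightarrow> x \<noteq> 0 \<Longrightarrow> y \<in> L \<Longrightarrow> y \<noteq> 0 \<Longrightarrow> s (x * y) = s x * s y"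
  using s by (simp_all add: goss_plane_def)

lemma goss_power: "x \<in> L \<Longrightarrow> x \<noteq> 0 \<Longrightarrow> s (x ^ n) = s x ^ n"
proof (induction n)
  case 0
  then show ?case
    using goss_mult[of 1 1] goss_nonzero[of 1] L_one by simp
next
  case (Suc n)
  then show ?case
    using goss_mult[of x "x ^ n"] L_power by simp
qed

lemma goss_inverse:
  assumes "x \<in> L" "x \<noteq> 0"
  shows "s (inverse x) = inverse (s x)"
proof -
  have "s x * s (inverse x) = 1"
    using goss_mult[of x "inverse x"] goss_power[of 1 0] assms L_inverse L_one by simp
  then show ?thesis
    by (rule inverse_unique[symmetric])
qed

lemma goss_power_int: "x \<in> L \<Longrightarrow> x \<noteq> 0 \<Longrightarrow> s (x powi n) = s x powi n"
  by (cases "0 \<le> n") (simp_all add: power_int_def goss_power goss_inverse L_inverse)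

lemma v_goss_one_unit:
  assumes "u \<in> one_units v L"
  shows "v (s u) = 0"
proof -
  obtain y where "\<forall>u\<in>one_units v L. padic_pow v u y (s u)"
    using s by (auto simp: goss_plane_def)
  then have "vconv v (\<lambda>n. u ^ nat (y n)) (s u)"
    using assms by (simp add: padic_pow_def)
  moreover have "u \<noteq> 0 \<and> v u = 0"
    using v_eq_if_close[of 1 u] assms by (auto simp: one_units_def)
  ultimately show ?thesis
    using vconv_unit v_power by simp
qed

lemma v_goss_unit:
  assumes "\<beta> \<in> L" "\<beta> \<noteq> 0" "v \<beta> = 0"
  shows "v (s \<beta>) = 0"
proof -
  obtain N where "0 < N" "\<beta> ^ N \<in> one_units v L"
    using unit_power_in_one_units[OF assms] by blast
  then have "v (s \<beta> ^ N) = 0"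
    using v_goss_one_unit goss_power assms by metis
  then have "of_nat N * v (s \<beta>) = 0"
    using goss_nonzero v_power assms by simp
  with \<open>0 < N\<close> show ?thesis
    by simp
qed

lemma v_goss:
  assumes \<alpha>: "\<alpha> \<in> L" "\<alpha> \<noteq> 0"
  shows "v (s \<alpha>) = v (s (\<iota> fls_X)) * v \<alpha>"
proof -
  define t where "t = \<iota> fls_X"
  have t: "t \<in> L" "t \<noteq> 0" "v t = 1"
    using iota_X by (simp_all add: t_def)
  obtain a b where ab: "quotient_of (v \<alpha>) = (a, b)"
    by (cases "quotient_of (v \<alpha>)")
  have "0 < b" "v \<alpha> = of_int a / of_int b"
    using quotient_of_denom_pos[OF ab] quotient_of_div[OF ab] by simp_all
  define u where "u = \<alpha> ^ nat b * t powi (- a)"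
  have u: "u \<in> L" "u \<noteq> 0" "v u = 0"
    using \<alpha> t \<open>0 < b\<close> \<open>v \<alpha> = of_int a / of_int b\<close>
    by (simp_all add: u_def L_mult L_power L_power_int v_mult v_power v_power_int)
  have "\<alpha> ^ nat b = u * t powi a"
    using t by (simp add: u_def power_int_minus)
  then have "s (\<alpha> ^ nat b) = s u * s (t powi a)"
    using goss_mult[of u "t powi a"] t u L_power_int by simp
  then have "s \<alpha> ^ nat b = s u * s t powi a"
    using goss_power goss_power_int \<alpha> t by simp
  moreover have "v (s \<alpha> ^ nat b) = of_int b * v (s \<alpha>)"
    using v_power goss_nonzero \<alpha> \<open>0 < b\<close> by simp
  moreover have "v (s u * s t powi a) = of_int a * v (s t)"
    using v_mult v_power_int goss_nonzero u t v_goss_unit[OF u] by simp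
  ultimately have "of_int b * v (s \<alpha>) = of_int a * v (s t)"
    by simp
  with \<open>0 < b\<close> have "v (s \<alpha>) = of_int a / of_int b * v (s t)"
    by (simp add: field_simps)
  with \<open>v \<alpha> = of_int a / of_int b\<close> show ?thesis
    by (simp add: t_def mult.commute)
qed

end

end

theorem lemma2p6:
  fixes v :: "'c::field \<Rightarrow> rat" and \<iota> :: "'k::{field,finite} fls \<Rightarrow> 'c" and L :: "'c set"
  assumes "is_C_P v \<iota>"
    and "finite_ext \<iota> L"
  shows "\<exists>r :: ('c \<Rightarrow> 'c) \<Rightarrow> rat.
           (\<forall>s\<in>goss_plane CHAR('k) v L. \<forall>t\<in>goss_plane CHAR('k) v L.
              r (goss_add s t) = r s + r t) \<and>
           (\<forall>s\<in>goss_plane CHAR('k) v L. \<forall>\<alpha>\<in>L - {0}. vL v L (s \<alpha>) = r s * vL v L \<alpha>) \<and>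
           (\<forall>r' :: ('c \<Rightarrow> 'c) \<Rightarrow> rat.
              ((\<forall>s\<in>goss_plane CHAR('k) v L. \<forall>t\<in>goss_plane CHAR('k) v L.
                  r' (goss_add s t) = r' s + r' t) \<and>
               (\<forall>s\<in>goss_plane CHAR('k) v L. \<forall>\<alpha>\<in>L - {0}. vL v L (s \<alpha>) = r' s * vL v L \<alpha>))
              \<longrightarrow> (\<forall>s\<in>goss_plane CHAR('k) v L. r' s = r s))"
proof -
  interpret K_P_extension v \<iota> L
    using assms by unfold_locales (simp_all add: is_C_P_def)
  define r where "r s = v (s (\<iota> fls_X))" for s :: "'c \<Rightarrow> 'c"
  have additive: "r (goss_add s t) = r s + r t"
    if "s \<in> goss_plane CHAR('k) v L" "t \<in> goss_plane CHAR('k) v L" for s t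
    using goss_nonzero[OF that(1)] goss_nonzero[OF that(2)] iota_X
    by (simp add: r_def goss_add_def v_mult)
  have scaling: "vL v L (s \<alpha>) = r s * vL v L \<alpha>"
    if "s \<in> goss_plane CHAR('k) v L" "\<alpha> \<in> L - {0}" for s \<alpha>
    using v_goss[OF that(1)] that(2) by (simp add: r_def vL_def)
  have "vL v L (\<iota> fls_X) \<noteq> 0"
    using ram_index_pos iota_X by (simp add: vL_def)
  then have unique: "r' s = r s"
    if "\<forall>s\<in>goss_plane CHAR('k) v L. \<forall>\<alpha>\<in>L - {0}. vL v L (s \<alpha>) = r' s * vL v L \<alpha>"
      "s \<in> goss_plane CHAR('k) v L" for r' s
    using that scaling[OF that(2)] iota_X by (metis DiffI mult_right_cancel singletonD)
  show ?thesis
    using additive scaling unique by (intro exI[of _ r]) blast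
qed

end
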